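(* For the Diverse Population-Based EA on the weighted vertex cover problem with $n$ vertices, the search point $0^n$ is included in the population in expected time $O(n^2\log n)$.
   Context: Weighted vertex cover: $G=(V,E)$, $V=\{v_1,\dots,v_n\}$, $w:V\to\mathbb{N}^+$. Search points $x\in\{0,1\}^n$; $|x|_1$ is the number of ones. $Cost(x)=\sum_i w(v_i)x_i$; $G(x)=(V(x),E(x))$ with $V(x)=V\setminus\{v_i:x_i=1\}$, $E(x)$ = edges with no selected endpoint; $LP(x)$ = optimal value of: minimize $\sum_{v_i\in V(x)}w(v_i)y_i$ s.t. $y_i+y_j\ge1$ for $\{v_i,v_j\}\in E(x)$, $0\le y_i\le1$. Alternative mutation operator on $x$: choose $b\in\{0,1\}$ uniformly; if $b=1$, flip each $x_i$ with probability $1/2$ if $v_i$ is incident to an edge of $E(x)$ and with probability $1/n$ otherwise; if $b=0$, flip each bit independently with probability $1/n$. Diverse Population-Based EA: start with uniformly random $x$, $P=\{x\}$. Each iteration: choose $x\in P$ uniformly; create $x'$ by the alternative mutation operator; add $x'$ to $P$; let $P'=\{y\in P:|y|_1=|x'|_1\}$; let $y_{min_1}\in P'$ minimize $Cost(z)+LP(z)$ and $y_{min_2}\in P'$ minimize $Cost(z)+2LP(z)$ over $P'$; set $P\leftarrow(P\setminus P')\cup\{y_{min_1},y_{min_2}\}$. Time = number of iterations. *)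

theory Defs
  imports "HOL-Probability.Probability"
begin

text \<open>Vertices are 0..<n; a search point is a function nat => bool that is False
  outside {..<n} (bit i = x_i). Edges E are 2-element subsets of {..<n}.\<close>

type_synonym spoint = "nat \<Rightarrow> bool"

definition wvc_graph :: "nat \<Rightarrow> nat set set \<Rightarrow> (nat \<Rightarrow> nat) \<Rightarrow> bool" where
  "wvc_graph n E w \<longleftrightarrow>
     (\<forall>e\<in>E. \<exists>i j. e = {i, j} \<and> i \<noteq> j \<and> i < n \<and> j < n) \<and> (\<forall>i<n. w i > 0)"

definition ones :: "nat \<Rightarrow> spoint \<Rightarrow> nat" where
  "ones n x = card {i. i < n \<and> x i}"

definition cost :: "nat \<Rightarrow> (nat \<Rightarrow> nat) \<Rightarrow> spoint \<Rightarrow> real" where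
  "cost n w x = (\<Sum>i | i < n \<and> x i. real (w i))"

definition Vx :: "nat \<Rightarrow> spoint \<Rightarrow> nat set" where
  "Vx n x = {i. i < n \<and> \<not> x i}"

definition Ex :: "nat set set \<Rightarrow> spoint \<Rightarrow> nat set set" where
  "Ex E x = {e \<in> E. \<forall>i\<in>e. \<not> x i}"

text \<open>Optimal value of the LP relaxation on the residual graph G(x).\<close>
definition LP :: "nat \<Rightarrow> nat set set \<Rightarrow> (nat \<Rightarrow> nat) \<Rightarrow> spoint \<Rightarrow> real" where
  "LP n E w x = Inf {(\<Sum>i\<in>Vx n x. real (w i) * y i) | y :: nat \<Rightarrow> real.
       (\<forall>i\<in>Vx n x. 0 \<le> y i \<and> y i \<le> 1) \<and>
       (\<forall>i j. {i, j} \<in> Ex E x \<longrightarrow> i \<noteq> j \<longrightarrow> y i + y j \<ge> 1)}"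

definition mutate :: "nat \<Rightarrow> nat set set \<Rightarrow> spoint \<Rightarrow> spoint pmf" where
  "mutate n E x = do {
     b \<leftarrow> bernoulli_pmf (1/2);
     c \<leftarrow> Pi_pmf {..<n} False
            (\<lambda>i. bernoulli_pmf (if b \<and> (\<exists>e\<in>Ex E x. i \<in> e) then 1/2 else 1 / real n));
     return_pmf (\<lambda>i. x i \<noteq> c i) }"

text \<open>Tie-breaking rules: sel1 / sel2 return a minimiser of Cost+LP / Cost+2LP.\<close>
definition is_selector :: "(spoint \<Rightarrow> real) \<Rightarrow> (spoint set \<Rightarrow> spoint) \<Rightarrow> bool" where
  "is_selector f sel \<longleftrightarrow>
     (\<forall>S. finite S \<and> S \<noteq> {} \<longrightarrow> sel S \<in> S \<and> (\<forall>z\<in>S. f (sel S) \<le> f z))"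

definition dpea_step :: "nat \<Rightarrow> nat set set \<Rightarrow> (spoint set \<Rightarrow> spoint) \<Rightarrow> (spoint set \<Rightarrow> spoint)
    \<Rightarrow> spoint set \<Rightarrow> spoint set pmf" where
  "dpea_step n E sel1 sel2 P = do {
     x \<leftarrow> pmf_of_set P;
     x' \<leftarrow> mutate n E x;
     let P1 = insert x' P;
     let P' = {y \<in> P1. ones n y = ones n x'};
     return_pmf ((P1 - P') \<union> {sel1 P', sel2 P'}) }"

definition zero_pt :: spoint where "zero_pt = (\<lambda>_. False)"

definition init_pt :: "nat \<Rightarrow> spoint pmf" where
  "init_pt n = Pi_pmf {..<n} False (\<lambda>_. bernoulli_pmf (1/2))"

text \<open>Distribution of the population after t iterations, for the chain stopped once 0^n
  is in the population (so "0^n not in P_t" is the event that the hitting time exceeds t).\<close>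
primrec dpea_pop :: "nat \<Rightarrow> nat set set \<Rightarrow> (spoint set \<Rightarrow> spoint) \<Rightarrow> (spoint set \<Rightarrow> spoint)
    \<Rightarrow> nat \<Rightarrow> spoint set pmf" where
  "dpea_pop n E sel1 sel2 0 = map_pmf (\<lambda>x. {x}) (init_pt n)"
| "dpea_pop n E sel1 sel2 (Suc t) = dpea_pop n E sel1 sel2 t \<bind>
     (\<lambda>P. if zero_pt \<in> P then return_pmf P else dpea_step n E sel1 sel2 P)"

text \<open>Expected hitting time of 0^n: sum over t of Pr[T > t].\<close>
definition expected_time_zero :: "nat \<Rightarrow> nat set set \<Rightarrow> (spoint set \<Rightarrow> spoint)
    \<Rightarrow> (spoint set \<Rightarrow> spoint) \<Rightarrow> ennreal" where
  "expected_time_zero n E sel1 sel2 =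
     (\<Sum>t. ennreal (measure_pmf.prob (dpea_pop n E sel1 sel2 t) {P. zero_pt \<notin> P}))"

end

theory Submission
  imports Defs
begin

text \<open>Let the level of a population be the least number of ones among its members. The
  level never increases: a new point only replaces points with its own number of ones, and
  one of the two selected points of that class survives. The population holds at most two
  points per number of ones, hence at most \<open>2(n+1)\<close> points. From level \<open>k > 0\<close> the
  algorithm selects a point on level \<open>k\<close>, chooses \<open>b = 0\<close> and flips exactly one of its \<open>k\<close>
  one-bits with probability at least \<open>k / (4 e n (n+1))\<close>, which lowers the level. The
  fitness-level method bounds the expected time by \<open>4 e n (n+1) H\<^sub>n = O(n\<^sup>2 log n)\<close>.\<close>

section \<open>Fitness levels for stopped Markov chains\<close>

lemma stopped_chain_invariant:
  fixes X :: "nat \<Rightarrow> 'a pmf"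
  assumes step: "\<And>t. X (Suc t) = X t \<bind> (\<lambda>s. if g s then return_pmf s else K s)"
    and init: "\<And>s. s \<in> set_pmf (X 0) \<Longrightarrow> I s"
    and preserve: "\<And>s s'. I s \<Longrightarrow> \<not> g s \<Longrightarrow> s' \<in> set_pmf (K s) \<Longrightarrow> I s'"
  shows "s \<in> set_pmf (X t) \<Longrightarrow> I s"
proof (induction t arbitrary: s)
  case 0
  then show ?case by (rule init)
next
  case (Suc t)
  then obtain s0 where "s0 \<in> set_pmf (X t)" "s \<in> set_pmf (if g s0 then return_pmf s0 else K s0)"
    by (auto simp: step)
  with Suc.IH preserve show ?case by (auto split: if_splits)
qed

text \<open>Additive drift; the left-hand side is the expected stopping time \<open>\<Sum>t. Pr[T > t]\<close>.\<close>

lemma suminf_prob_not_stopped_le_potential: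
  fixes X :: "nat \<Rightarrow> 'a pmf" and f :: "'a \<Rightarrow> ennreal"
  assumes step: "\<And>t. X (Suc t) = X t \<bind> (\<lambda>s. if g s then return_pmf s else K s)"
    and init: "\<And>s. s \<in> set_pmf (X 0) \<Longrightarrow> I s"
    and preserve: "\<And>s s'. I s \<Longrightarrow> \<not> g s \<Longrightarrow> s' \<in> set_pmf (K s) \<Longrightarrow> I s'"
    and drift: "\<And>s. I s \<Longrightarrow> \<not> g s \<Longrightarrow> (\<integral>\<^sup>+s'. f s' \<partial>K s) + 1 \<le> f s"
  shows "(\<Sum>t. ennreal (measure_pmf.prob (X t) {s. \<not> g s})) \<le> (\<integral>\<^sup>+s. f s \<partial>X 0)"
proof (rule suminf_le_const)
  let ?q = "\<lambda>t. ennreal (measure_pmf.prob (X t) {s. \<not> g s})"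
  have one_step: "(\<integral>\<^sup>+s. f s \<partial>X (Suc t)) + ?q t \<le> (\<integral>\<^sup>+s. f s \<partial>X t)" for t
  proof -
    have "(\<integral>\<^sup>+s. f s \<partial>X (Suc t)) + ?q t
        = (\<integral>\<^sup>+s. (\<integral>\<^sup>+s'. f s' \<partial>(if g s then return_pmf s else K s)) + indicator {s. \<not> g s} s \<partial>X t)"
      by (simp add: step measure_pmf.emeasure_eq_measure[symmetric] nn_integral_add)
    also have "\<dots> \<le> (\<integral>\<^sup>+s. f s \<partial>X t)"
      using drift stopped_chain_invariant[where X = X and g = g and K = K and I = I, OF step init preserve]
      by (intro nn_integral_mono_AE AE_pmfI) auto
    finally show ?thesis .
  qed
  have telescope: "(\<integral>\<^sup>+s. f s \<partial>X T) + (\<Sum>t<T. ?q t) \<le> (\<integral>\<^sup>+s. f s \<partial>X 0)" for T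
  proof (induction T)
    case (Suc T)
    have "(\<integral>\<^sup>+s. f s \<partial>X (Suc T)) + (\<Sum>t<Suc T. ?q t)
        \<le> (\<integral>\<^sup>+s. f s \<partial>X T) + (\<Sum>t<T. ?q t)"
      using one_step[of T] by (simp add: add_ac add_right_mono)
    then show ?case using Suc.IH by (rule order_trans)
  qed simp
  show "(\<Sum>t<T. ?q t) \<le> (\<integral>\<^sup>+s. f s \<partial>X 0)" for T
    using telescope[of T] by (rule order_trans[rotated]) simp
qed simp

lemma fitness_levels:
  fixes X :: "nat \<Rightarrow> 'a pmf" and L :: "'a \<Rightarrow> nat" and p :: "nat \<Rightarrow> real"
  assumes step: "\<And>t. X (Suc t) = X t \<bind> (\<lambda>s. if g s then return_pmf s else K s)"
    and init: "\<And>s. s \<in> set_pmf (X 0) \<Longrightarrow> I s"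
    and preserve: "\<And>s s'. I s \<Longrightarrow> \<not> g s \<Longrightarrow> s' \<in> set_pmf (K s) \<Longrightarrow> I s' \<and> L s' \<le> L s"
    and level_le: "\<And>s. I s \<Longrightarrow> L s \<le> N"
    and stopped_iff: "\<And>s. I s \<Longrightarrow> g s \<longleftrightarrow> L s = 0"
    and progress: "\<And>s. I s \<Longrightarrow> \<not> g s \<Longrightarrow> p (L s) \<le> measure_pmf.prob (K s) {s'. L s' < L s}"
    and p_pos: "\<And>k. 1 \<le> k \<Longrightarrow> k \<le> N \<Longrightarrow> p k > 0"
  shows "(\<Sum>t. ennreal (measure_pmf.prob (X t) {s. \<not> g s})) \<le> ennreal (\<Sum>k=1..N. 1 / p k)"
proof -
  define h where "h k = (\<Sum>j=1..k. 1 / p j)" for k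
  have h_mono: "h k \<le> h k'" if "k \<le> k'" "k' \<le> N" for k k'
    unfolding h_def using that p_pos by (intro sum_mono2) (auto intro: less_imp_le)
  have h_step: "h k' + 1 / p k \<le> h k" if "k' < k" "k \<le> N" for k k'
  proof -
    have "h k = h (k - 1) + 1 / p k"
      unfolding h_def using that by (cases k) auto
    with h_mono[of k' "k - 1"] that show ?thesis by simp
  qed
  have h_nonneg: "0 \<le> h k" if "k \<le> N" for k
    using h_mono[of 0 k] that by (simp add: h_def)
  have drift: "(\<integral>\<^sup>+s'. ennreal (h (L s')) \<partial>K s) + 1 \<le> ennreal (h (L s))"
    if I: "I s" and not_stopped: "\<not> g s" for s
  proof -
    define k where "k = L s"
    define A where "A = {s'. L s' < k}"
    have k: "1 \<le> k" "k \<le> N" using stopped_iff[OF I] level_le[OF I] not_stopped k_def by auto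
    have pk: "p k > 0" using p_pos k by simp
    have pointwise: "ennreal (h (L s')) + ennreal (1 / p k) * indicator A s' \<le> ennreal (h k)"
      if "s' \<in> set_pmf (K s)" for s'
    proof -
      have "L s' \<le> k" using preserve[OF I not_stopped that] k_def by simp
      then show ?thesis
        using h_step[of "L s'" k] h_mono[of "L s'" k] h_nonneg[of "L s'"] k pk
        by (cases "L s' < k") (auto simp: A_def ennreal_plus[symmetric] ennreal_leI simp del: ennreal_plus)
    qed
    have "1 \<le> ennreal (1 / p k) * emeasure (K s) A"
    proof -
      have "1 \<le> 1 / p k * measure_pmf.prob (K s) A"
        using progress[OF I not_stopped] pk by (simp add: A_def k_def field_simps)
      then show ?thesis
        using pk by (simp add: measure_pmf.emeasure_eq_measure ennreal_mult[symmetric] del: ennreal_1)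
    qed
    then have "(\<integral>\<^sup>+s'. ennreal (h (L s')) \<partial>K s) + 1
        \<le> (\<integral>\<^sup>+s'. ennreal (h (L s')) + ennreal (1 / p k) * indicator A s' \<partial>K s)"
      by (simp add: nn_integral_add nn_integral_cmult_indicator add_left_mono)
    also have "\<dots> \<le> (\<integral>\<^sup>+s'. ennreal (h k) \<partial>K s)"
      using pointwise by (intro nn_integral_mono_AE AE_pmfI)
    finally show ?thesis by (simp add: k_def measure_pmf.emeasure_space_1)
  qed
  have "(\<Sum>t. ennreal (measure_pmf.prob (X t) {s. \<not> g s})) \<le> (\<integral>\<^sup>+s. ennreal (h (L s)) \<partial>X 0)"
    using preserve drift
    by (intro suminf_prob_not_stopped_le_potential[where X = X and g = g and K = K and I = I, OF step init]) blast+
  also have "\<dots> \<le> (\<integral>\<^sup>+s. ennreal (h N) \<partial>X 0)"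
    using init level_le h_mono by (intro nn_integral_mono_AE AE_pmfI) (simp add: ennreal_leI)
  finally show ?thesis by (simp add: h_def measure_pmf.emeasure_space_1)
qed

section \<open>Probability estimates for the mutation operator\<close>

lemma measure_bind_pmf_of_set:
  assumes "finite S" "S \<noteq> {}"
  shows "measure_pmf.prob (pmf_of_set S \<bind> N) A = (\<Sum>x\<in>S. measure_pmf.prob (N x) A) / card S"
proof -
  have "ennreal (measure_pmf.prob (pmf_of_set S \<bind> N) A)
      = (\<Sum>x\<in>S. ennreal (measure_pmf.prob (N x) A)) / of_nat (card S)"
    using assms by (simp add: measure_pmf.emeasure_eq_measure[symmetric] nn_integral_pmf_of_set)
  also have "\<dots> = ennreal ((\<Sum>x\<in>S. measure_pmf.prob (N x) A) / card S)"
    using assms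
    by (simp add: sum_ennreal ennreal_of_nat_eq_real_of_nat card_gt_0_iff divide_ennreal sum_nonneg)
  finally show ?thesis by (simp add: ennreal_inj sum_nonneg divide_nonneg_nonneg)
qed

lemma measure_bind_bernoulli_half:
  "measure_pmf.prob (bernoulli_pmf (1/2) \<bind> N) A
     = (measure_pmf.prob (N True) A + measure_pmf.prob (N False) A) / 2"
proof -
  have "ennreal (measure_pmf.prob (bernoulli_pmf (1/2) \<bind> N) A)
      = ennreal (measure_pmf.prob (N True) A) * ennreal (1/2)
        + ennreal (measure_pmf.prob (N False) A) * ennreal (1/2)"
    by (simp add: measure_pmf.emeasure_eq_measure[symmetric])
  also have "\<dots> = ennreal ((measure_pmf.prob (N True) A + measure_pmf.prob (N False) A) / 2)"
    using ennreal_mult[of "measure_pmf.prob (N True) A" "1/2"] ennreal_mult[of "measure_pmf.prob (N False) A" "1/2"]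
      ennreal_plus[of "measure_pmf.prob (N True) A / 2" "measure_pmf.prob (N False) A / 2"]
    by (simp add: add_divide_distrib)
  finally show ?thesis by (simp add: ennreal_inj)
qed

lemma exp_neg_one_le_one_minus_inverse_power:
  assumes "n \<ge> (2::nat)"
  shows "exp (-1) \<le> (1 - 1 / real n) ^ (n - 1)"
proof -
  define m where "m = n - 1"
  have m: "m \<ge> 1" "real n = real m + 1" using assms by (auto simp: m_def)
  have "(1 + 1 / real m) ^ m \<le> exp (1 / real m) ^ m"
    by (intro power_mono) (auto simp: exp_ge_add_one_self add_increasing)
  also have "\<dots> = exp 1" using m by (simp add: exp_of_nat_mult[symmetric])
  finally have "(1 + 1 / real m) ^ m \<le> exp 1" .
  moreover have "1 - 1 / real n = inverse (1 + 1 / real m)"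
    using m by (simp add: field_simps)
  then have "(1 - 1 / real n) ^ m = inverse ((1 + 1 / real m) ^ m)"
    by (simp add: power_inverse)
  ultimately show ?thesis
    by (simp add: m_def exp_minus le_imp_inverse_le add_pos_nonneg)
qed

lemma pmf_Pi_bernoulli_single:
  assumes "i < n"
  shows "pmf (Pi_pmf {..<n} False (\<lambda>_. bernoulli_pmf (1 / real n))) (\<lambda>j. j = i)
         = 1 / real n * (1 - 1 / real n) ^ (n - 1)"
proof -
  have "pmf (Pi_pmf {..<n} False (\<lambda>_. bernoulli_pmf (1 / real n))) (\<lambda>j. j = i)
      = (\<Prod>j\<in>{..<n}. pmf (bernoulli_pmf (1 / real n)) (j = i))"
    using assms by (subst pmf_Pi') auto
  also have "\<dots> = pmf (bernoulli_pmf (1 / real n)) True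
                  * (\<Prod>j\<in>{..<n} - {i}. pmf (bernoulli_pmf (1 / real n)) False)"
    using assms by (subst prod.remove[of _ i]) (auto intro!: prod.cong)
  finally show ?thesis using assms by simp
qed

text \<open>Flipping exactly one of the \<open>k\<close> one-bits happens with probability
  \<open>k (1/n) (1 - 1/n)^(n-1) \<ge> k / (e n)\<close>.\<close>

lemma prob_standard_mutation_fewer_ones:
  assumes "n \<ge> 2"
  shows "real (ones n x) / (exp 1 * real n)
    \<le> measure_pmf.prob (map_pmf (\<lambda>c i. x i \<noteq> c i) (Pi_pmf {..<n} False (\<lambda>_. bernoulli_pmf (1 / real n))))
         {x'. ones n x' < ones n x}"
proof -
  define Q where "Q = Pi_pmf {..<n} False (\<lambda>_. bernoulli_pmf (1 / real n))"
  define flip where "flip c = (\<lambda>i. x i \<noteq> c i)" for c :: "nat \<Rightarrow> bool"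
  define S where "S = {i. i < n \<and> x i}"
  define single where "single i = (\<lambda>j::nat. j = i)" for i
  have ones_x: "ones n x = card S" unfolding ones_def S_def by simp
  have "single ` S \<subseteq> flip -` {x'. ones n x' < ones n x}"
  proof
    fix c assume "c \<in> single ` S"
    then obtain i where i: "i \<in> S" "c = single i" by auto
    then have "{j. j < n \<and> flip c j} = S - {i}" unfolding S_def flip_def single_def by auto
    moreover have "card S > 0" using i by (auto simp: S_def card_gt_0_iff)
    ultimately show "c \<in> flip -` {x'. ones n x' < ones n x}"
      using i by (simp add: ones_def ones_x S_def)
  qed
  then have "measure_pmf.prob Q (single ` S) \<le> measure_pmf.prob (map_pmf flip Q) {x'. ones n x' < ones n x}"
    by (simp add: measure_pmf.finite_measure_mono)
  moreover have "measure_pmf.prob Q (single ` S) = real (card S) * (1 / real n * (1 - 1 / real n) ^ (n - 1))"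
  proof -
    have "inj_on single S" unfolding single_def inj_on_def by metis
    then have "measure_pmf.prob Q (single ` S) = (\<Sum>i\<in>S. pmf Q (single i))"
      by (simp add: measure_measure_pmf_finite S_def sum.reindex)
    also have "\<dots> = (\<Sum>i\<in>S. 1 / real n * (1 - 1 / real n) ^ (n - 1))"
      by (intro sum.cong) (auto simp: S_def Q_def single_def pmf_Pi_bernoulli_single)
    finally show ?thesis by simp
  qed
  moreover have "real (card S) / (exp 1 * real n) = real (card S) * (1 / real n * exp (-1))"
    by (simp add: exp_minus field_simps)
  moreover have "\<dots> \<le> real (card S) * (1 / real n * (1 - 1 / real n) ^ (n - 1))"
    using exp_neg_one_le_one_minus_inverse_power[OF assms] by (intro mult_left_mono) auto
  ultimately show ?thesis unfolding Q_def flip_def ones_x by linarith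
qed

lemma prob_mutate_fewer_ones:
  assumes "n \<ge> 2"
  shows "real (ones n x) / (2 * exp 1 * real n) \<le> measure_pmf.prob (mutate n E x) {x'. ones n x' < ones n x}"
proof -
  define N where "N b = map_pmf (\<lambda>c i. x i \<noteq> c i) (Pi_pmf {..<n} False
      (\<lambda>i. bernoulli_pmf (if b \<and> (\<exists>e\<in>Ex E x. i \<in> e) then 1/2 else 1 / real n)))" for b
  have "mutate n E x = bernoulli_pmf (1/2) \<bind> N"
    unfolding mutate_def N_def map_pmf_def by simp
  then have "measure_pmf.prob (mutate n E x) {x'. ones n x' < ones n x}
      = (measure_pmf.prob (N True) {x'. ones n x' < ones n x} + measure_pmf.prob (N False) {x'. ones n x' < ones n x}) / 2"
    by (simp add: measure_bind_bernoulli_half)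
  moreover have "real (ones n x) / (exp 1 * real n) \<le> measure_pmf.prob (N False) {x'. ones n x' < ones n x}"
    unfolding N_def using prob_standard_mutation_fewer_ones[OF assms] by simp
  moreover have "real (ones n x) / (2 * exp 1 * real n) = real (ones n x) / (exp 1 * real n) / 2"
    by simp
  ultimately show ?thesis
    using measure_nonneg[of "N True" "{x'. ones n x' < ones n x}"] by argo
qed

section \<open>Populations and their level\<close>

definition valid_point :: "nat \<Rightarrow> spoint \<Rightarrow> bool" where
  "valid_point n y \<longleftrightarrow> (\<forall>i\<ge>n. \<not> y i)"

definition pop_inv :: "nat \<Rightarrow> spoint set \<Rightarrow> bool" where
  "pop_inv n P \<longleftrightarrow> finite P \<and> P \<noteq> {} \<and> (\<forall>y\<in>P. valid_point n y)
     \<and> (\<forall>k. card {y\<in>P. ones n y = k} \<le> 2)"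

definition offspring_pop :: "nat \<Rightarrow> (spoint set \<Rightarrow> spoint) \<Rightarrow> (spoint set \<Rightarrow> spoint)
    \<Rightarrow> spoint set \<Rightarrow> spoint \<Rightarrow> spoint set" where
  "offspring_pop n sel1 sel2 P x' =
     (let P1 = insert x' P; P' = {y \<in> P1. ones n y = ones n x'} in (P1 - P') \<union> {sel1 P', sel2 P'})"

definition pop_level :: "nat \<Rightarrow> spoint set \<Rightarrow> nat" where
  "pop_level n P = Min (ones n ` P)"

lemma dpea_step_eq_offspring_pop:
  "dpea_step n E sel1 sel2 P = pmf_of_set P \<bind> (\<lambda>x. map_pmf (offspring_pop n sel1 sel2 P) (mutate n E x))"
  by (simp add: dpea_step_def offspring_pop_def map_pmf_def Let_def)

lemma ones_le: "ones n y \<le> n"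
  unfolding ones_def by (rule order_trans[OF card_mono[of "{..<n}"]]) auto

lemma ones_eq_0_iff: "valid_point n y \<Longrightarrow> ones n y = 0 \<longleftrightarrow> y = zero_pt"
  unfolding ones_def valid_point_def zero_pt_def by (auto simp: fun_eq_iff not_less)

lemma valid_point_init_pt: "x \<in> set_pmf (init_pt n) \<Longrightarrow> valid_point n x"
  using set_Pi_pmf_subset[of "{..<n}" False] unfolding init_pt_def valid_point_def by fastforce

lemma valid_point_mutate:
  assumes "valid_point n x" "x' \<in> set_pmf (mutate n E x)"
  shows "valid_point n x'"
proof -
  obtain b c where "c \<in> set_pmf (Pi_pmf {..<n} False
      (\<lambda>i. bernoulli_pmf (if b \<and> (\<exists>e\<in>Ex E x. i \<in> e) then 1/2 else 1 / real n)))"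
    and "x' = (\<lambda>i. x i \<noteq> c i)"
    using assms(2) unfolding mutate_def by auto
  with set_Pi_pmf_subset[of "{..<n}" False] assms(1) show ?thesis
    unfolding valid_point_def by fastforce
qed

lemma pop_inv_singleton: "valid_point n x \<Longrightarrow> pop_inv n {x}"
  unfolding pop_inv_def by (auto intro: order_trans[OF card_mono[of "{x}"]])

lemma card_le_if_pop_inv:
  assumes "pop_inv n P"
  shows "card P \<le> 2 * (n + 1)"
proof -
  have "P = (\<Union>k\<le>n. {y\<in>P. ones n y = k})" using ones_le by auto
  also have "card \<dots> \<le> (\<Sum>k\<le>n. card {y\<in>P. ones n y = k})"
    by (rule card_UN_le) simp
  also have "\<dots> \<le> (\<Sum>k\<le>n. 2)" using assms by (intro sum_mono) (simp add: pop_inv_def)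
  finally show ?thesis by simp
qed

lemma pop_level_le_ones: "finite P \<Longrightarrow> y \<in> P \<Longrightarrow> pop_level n P \<le> ones n y"
  unfolding pop_level_def by auto

lemma pop_level_attained:
  assumes "finite P" "P \<noteq> {}"
  obtains y where "y \<in> P" "ones n y = pop_level n P"
  using assms Min_in[of "ones n ` P"] unfolding pop_level_def by fastforce

lemma pop_level_le: "finite P \<Longrightarrow> P \<noteq> {} \<Longrightarrow> pop_level n P \<le> n"
  by (metis pop_level_attained ones_le)

lemma pop_level_eq_0_iff: "pop_inv n P \<Longrightarrow> pop_level n P = 0 \<longleftrightarrow> zero_pt \<in> P"
  unfolding pop_inv_def
  by (metis pop_level_attained pop_level_le_ones le_zero_eq ones_eq_0_iff)

context
  fixes sel1 sel2 :: "spoint set \<Rightarrow> spoint"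
  assumes sel1_in: "\<And>S. finite S \<Longrightarrow> S \<noteq> {} \<Longrightarrow> sel1 S \<in> S"
    and sel2_in: "\<And>S. finite S \<Longrightarrow> S \<noteq> {} \<Longrightarrow> sel2 S \<in> S"
begin

lemma offspring_pop_facts:
  assumes "finite P"
  shows "offspring_pop n sel1 sel2 P x' \<subseteq> insert x' P"
    and "\<exists>z\<in>offspring_pop n sel1 sel2 P x'. ones n z = ones n x'"
    and "card {y\<in>offspring_pop n sel1 sel2 P x'. ones n y = ones n x'} \<le> 2"
    and "k \<noteq> ones n x' \<Longrightarrow> {y\<in>offspring_pop n sel1 sel2 P x'. ones n y = k} = {y\<in>P. ones n y = k}"
proof -
  define P' where "P' = {y \<in> insert x' P. ones n y = ones n x'}"
  have "finite P'" "P' \<noteq> {}" using assms by (auto simp: P'_def)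
  then have sel: "sel1 P' \<in> P'" "sel2 P' \<in> P'" by (auto intro: sel1_in sel2_in)
  have "card {y\<in>offspring_pop n sel1 sel2 P x'. ones n y = ones n x'} \<le> card {sel1 P', sel2 P'}"
    by (rule card_mono) (auto simp: offspring_pop_def P'_def Let_def)
  also have "\<dots> \<le> 2" by (simp add: card_insert_le_m1)
  finally show "card {y\<in>offspring_pop n sel1 sel2 P x'. ones n y = ones n x'} \<le> 2" .
  show "offspring_pop n sel1 sel2 P x' \<subseteq> insert x' P"
    and "\<exists>z\<in>offspring_pop n sel1 sel2 P x'. ones n z = ones n x'"
    and "k \<noteq> ones n x' \<Longrightarrow> {y\<in>offspring_pop n sel1 sel2 P x'. ones n y = k} = {y\<in>P. ones n y = k}"
    using sel unfolding offspring_pop_def P'_def Let_def by auto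
qed

lemma pop_inv_offspring_pop:
  assumes "pop_inv n P" "valid_point n x'"
  shows "pop_inv n (offspring_pop n sel1 sel2 P x')"
proof -
  let ?Q = "offspring_pop n sel1 sel2 P x'"
  have P: "finite P" using assms(1) by (simp add: pop_inv_def)
  have "card {y\<in>?Q. ones n y = k} \<le> 2" for k
    using offspring_pop_facts(3,4)[OF P, where n = n and x' = x'] assms(1) by (cases "k = ones n x'") (auto simp: pop_inv_def)
  moreover have "finite ?Q" "?Q \<noteq> {}" "\<forall>y\<in>?Q. valid_point n y"
    using offspring_pop_facts(1,2)[OF P, where n = n and x' = x'] assms by (auto simp: pop_inv_def dest: finite_subset)
  ultimately show ?thesis by (simp add: pop_inv_def)
qed

lemma pop_level_offspring_pop:
  assumes "finite P" "P \<noteq> {}"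
  shows "pop_level n (offspring_pop n sel1 sel2 P x') \<le> min (pop_level n P) (ones n x')"
proof -
  let ?Q = "offspring_pop n sel1 sel2 P x'"
  have Q: "finite ?Q" using offspring_pop_facts(1)[OF assms(1)] assms(1) by (auto intro: finite_subset)
  have le_x': "pop_level n ?Q \<le> ones n x'"
    using offspring_pop_facts(2)[OF assms(1), where n = n and x' = x'] pop_level_le_ones[OF Q] by metis
  obtain y where y: "y \<in> P" "ones n y = pop_level n P" using pop_level_attained[OF assms] .
  have "pop_level n ?Q \<le> ones n y"
  proof (cases "ones n y = ones n x'")
    case False
    then have "y \<in> ?Q" using offspring_pop_facts(4)[OF assms(1), where n = n and x' = x' and k = "ones n y"] y by blast
    then show ?thesis by (rule pop_level_le_ones[OF Q])
  qed (use le_x' in simp)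
  with le_x' y show ?thesis by simp
qed

lemma dpea_step_preserves_pop_inv:
  assumes "pop_inv n P" "Q \<in> set_pmf (dpea_step n E sel1 sel2 P)"
  shows "pop_inv n Q \<and> pop_level n Q \<le> pop_level n P"
proof -
  have P: "finite P" "P \<noteq> {}" using assms(1) by (auto simp: pop_inv_def)
  then obtain x x' where "x \<in> P" "x' \<in> set_pmf (mutate n E x)" "Q = offspring_pop n sel1 sel2 P x'"
    using assms(2) by (auto simp: dpea_step_eq_offspring_pop)
  moreover from this have "valid_point n x'"
    using assms(1) valid_point_mutate by (auto simp: pop_inv_def)
  ultimately show ?thesis
    using pop_inv_offspring_pop[OF assms(1)] pop_level_offspring_pop[OF P]
    by auto
qed

lemma prob_dpea_step_level_decreases:
  assumes "n \<ge> 2" "pop_inv n P"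
  shows "real (pop_level n P) / (4 * exp 1 * real n * (real n + 1))
    \<le> measure_pmf.prob (dpea_step n E sel1 sel2 P) {Q. pop_level n Q < pop_level n P}"
proof -
  define k where "k = pop_level n P"
  define A where "A = {Q. pop_level n Q < k}"
  define offspring where "offspring = offspring_pop n sel1 sel2 P"
  have P: "finite P" "P \<noteq> {}" using assms(2) by (auto simp: pop_inv_def)
  obtain y where y: "y \<in> P" "ones n y = k" using pop_level_attained[OF P] k_def by metis
  have card_P: "0 < real (card P)" "real (card P) \<le> 2 * (real n + 1)"
    using P card_le_if_pop_inv[OF assms(2)] by (auto simp: card_gt_0_iff)
  have "real k / (2 * exp 1 * real n) \<le> measure_pmf.prob (mutate n E y) {x'. ones n x' < ones n y}"
    using prob_mutate_fewer_ones[OF assms(1), where x = y and E = E] y by simp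
  also have "\<dots> \<le> measure_pmf.prob (mutate n E y) (offspring -` A)"
  proof (rule measure_pmf.finite_measure_mono)
    show "{x'. ones n x' < ones n y} \<subseteq> offspring -` A"
      using pop_level_offspring_pop[OF P, where n = n] y
      by (auto simp: A_def offspring_def intro: le_less_trans)
  qed simp
  also have "\<dots> \<le> (\<Sum>x\<in>P. measure_pmf.prob (map_pmf offspring (mutate n E x)) A)"
    using y P by (auto intro: member_le_sum)
  finally have sum_bound: "real k / (2 * exp 1 * real n) \<le> (\<Sum>x\<in>P. measure_pmf.prob (map_pmf offspring (mutate n E x)) A)" .
  have "real k / (4 * exp 1 * real n * (real n + 1)) = real k / (2 * exp 1 * real n) / (2 * (real n + 1))"
    by (simp add: field_simps)
  also have "\<dots> \<le> real k / (2 * exp 1 * real n) / real (card P)"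
    using card_P by (intro divide_left_mono) auto
  also have "\<dots> \<le> (\<Sum>x\<in>P. measure_pmf.prob (map_pmf offspring (mutate n E x)) A) / real (card P)"
    using sum_bound card_P by (intro divide_right_mono) auto
  also have "\<dots> = measure_pmf.prob (dpea_step n E sel1 sel2 P) A"
    using P by (simp add: dpea_step_eq_offspring_pop offspring_def measure_bind_pmf_of_set)
  finally show ?thesis by (simp add: k_def A_def)
qed

end

lemma sum_inverse_level_prob_le:
  assumes "n \<ge> (2::nat)"
  shows "(\<Sum>k=1..n. 1 / (real k / (4 * exp 1 * real n * (real n + 1)))) \<le> 60 * real n ^ 2 * ln (real n)"
proof -
  have ln_n: "ln 2 \<le> ln (real n)" using assms by simp
  have "(\<Sum>k=1..n. 1 / (real k / (4 * exp 1 * real n * (real n + 1)))) = 4 * exp 1 * real n * (real n + 1) * harm n"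
    by (simp add: harm_def sum_distrib_left inverse_eq_divide)
  also have "\<dots> \<le> (4 * 3 * real n * (2 * real n)) * (5/2 * ln (real n))"
  proof (rule mult_mono)
    show "4 * exp 1 * real n * (real n + 1) \<le> 4 * 3 * real n * (2 * real n)"
      using e_less_272 assms by (intro mult_mono) auto
    have "harm n - ln (real n) \<le> harm 1 - ln (real 1)"
      using assms by (intro euler_mascheroni_sequence_decreasing) auto
    then show "harm n \<le> 5/2 * ln (real n)" using ln2_ge_two_thirds ln_n by (simp add: harm_expand)
  qed (use ln_n ln2_ge_two_thirds harm_nonneg in auto)
  also have "\<dots> = 60 * real n ^ 2 * ln (real n)" by (simp add: power2_eq_square)
  finally show ?thesis .
qed

lemma is_selector_in: "is_selector f sel \<Longrightarrow> finite S \<Longrightarrow> S \<noteq> {} \<Longrightarrow> sel S \<in> S"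
  unfolding is_selector_def by blast

theorem lemma9:
  "\<exists>C::real. \<forall>n::nat. \<forall>E w sel1 sel2. n \<ge> 2 \<longrightarrow> wvc_graph n E w \<longrightarrow>
     is_selector (\<lambda>z. cost n w z + LP n E w z) sel1 \<longrightarrow>
     is_selector (\<lambda>z. cost n w z + 2 * LP n E w z) sel2 \<longrightarrow>
     expected_time_zero n E sel1 sel2 \<le> ennreal (C * real n ^ 2 * ln (real n))"
proof (intro exI[of _ 60] allI impI)
  fix n :: nat and E w and sel1 sel2 :: "spoint set \<Rightarrow> spoint"
  assume n: "n \<ge> 2" and "wvc_graph n E w"
    and "is_selector (\<lambda>z. cost n w z + LP n E w z) sel1"
    and "is_selector (\<lambda>z. cost n w z + 2 * LP n E w z) sel2"
  then have sel1_in: "\<And>S. finite S \<Longrightarrow> S \<noteq> {} \<Longrightarrow> sel1 S \<in> S"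
    and sel2_in: "\<And>S. finite S \<Longrightarrow> S \<noteq> {} \<Longrightarrow> sel2 S \<in> S"
    by (auto intro: is_selector_in)
  define p where "p k = real k / (4 * exp 1 * real n * (real n + 1))" for k :: nat
  have "expected_time_zero n E sel1 sel2 \<le> ennreal (\<Sum>k=1..n. 1 / p k)"
    unfolding expected_time_zero_def
  proof (rule fitness_levels[where I = "pop_inv n" and L = "pop_level n"])
    show "pop_inv n P" if "P \<in> set_pmf (dpea_pop n E sel1 sel2 0)" for P
      using that by (auto intro: pop_inv_singleton valid_point_init_pt)
    show "pop_inv n Q \<and> pop_level n Q \<le> pop_level n P"
      if "pop_inv n P" "Q \<in> set_pmf (dpea_step n E sel1 sel2 P)" for P Q
      using dpea_step_preserves_pop_inv[OF sel1_in sel2_in that] .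
    show "p (pop_level n P) \<le> measure_pmf.prob (dpea_step n E sel1 sel2 P) {Q. pop_level n Q < pop_level n P}"
      if "pop_inv n P" for P
      unfolding p_def using prob_dpea_step_level_decreases[OF sel1_in sel2_in n that] .
  qed (use n in \<open>auto simp: p_def pop_level_eq_0_iff pop_level_le pop_inv_def\<close>)
  also have "\<dots> \<le> ennreal (60 * real n ^ 2 * ln (real n))"
    using sum_inverse_level_prob_le[OF n] unfolding p_def by (rule ennreal_leI)
  finally show "expected_time_zero n E sel1 sel2 \<le> ennreal (60 * real n ^ 2 * ln (real n))" .
qed

end
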